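(* Let $\mathcal L$ be a finite atomic lattice with atoms $A_1,\dots,A_n$ and $\mathcal G$ a building set in $\mathcal L$. Construct a fan $\Theta(\mathcal L,\mathcal G)$ in $\mathbb R^n$ as follows. (0) Let $\Theta_0$ be the fan consisting of the cone spanned by the standard basis vectors $e_1,\dots,e_n$ of $\mathbb R^n$ and all its faces. (1) Choose a linear order $\succ$ on $\mathcal G$ with $G\le G'$ in $\mathcal L$ implying $G'\succeq G$, and write $\mathcal G=\{G_1\succ G_2\succ\dots\succ G_t\}$. For $i=1,\dots,t$ successively, perform the stellar subdivision of the current fan at the cone $V(\lfloor G_i\rfloor)$ with new ray generated by $v_{G_i}$; call the resulting fan $\widetilde\Theta(\mathcal L,\mathcal G)$. (2) Remove from $\widetilde\Theta(\mathcal L,\mathcal G)$ all cones $V(\mathcal T)$ whose set $\mathcal T\subseteq\mathcal G$ of indices of generating vectors is not nested, and call the result $\Theta(\mathcal L,\mathcal G)$. Then $\Theta(\mathcal L,\mathcal G)$ coincides with the fan $\Sigma(\mathcal L,\mathcal G)=\{V(\mathcal S):\mathcal S\text{ nested in }\mathcal G\}$.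
   Context: A lattice is a finite poset in which every subset has a join $\vee$ and a meet; $\hat0$ is its least element; atomic means every element is a join of atoms. For $X\le Y$ write $[X,Y]=\{Z:X\le Z\le Y\}$ and $\mathcal G_{\le X}=\{G\in\mathcal G:G\le X\}$. A subset $\mathcal G\subseteq\mathcal L\setminus\{\hat0\}$ is a building set if for every $X\ne\hat0$, with $\{G_1,\dots,G_k\}$ the maximal elements of $\mathcal G_{\le X}$, there is a poset isomorphism $\prod_{i=1}^k[\hat0,G_i]\to[\hat0,X]$ sending $(\hat0,\dots,G_i,\dots,\hat0)$ to $G_i$ (in particular all atoms lie in $\mathcal G$). A subset $\mathcal S\subseteq\mathcal G$ is nested if for every set of pairwise incomparable $G_1,\dots,G_t\in\mathcal S$, $t\ge2$, $G_1\vee\dots\vee G_t\notin\mathcal G$. For $X\in\mathcal L$, $\lfloor X\rfloor$ is the set of atoms below $X$, and $v_X\in\mathbb R^n$ has $i$-th coordinate $1$ if $A_i\le X$ and $0$ otherwise (so $v_{A_i}=e_i$); $V(\mathcal S)$ is the cone spanned by $\{v_X:X\in\mathcal S\}$. The stellar subdivision of a fan $\Theta$ at a cone $\tau\in\Theta$ with new ray spanned by $v$ in the relative interior of $\tau$ replaces every cone $\sigma\in\Theta$ containing $\tau$ by the cones spanned by $\rho\cup\{v\}$ for all faces $\rho$ of $\sigma$ not containing $\tau$ (and these faces $\rho$ themselves); here $v_{G_i}$ is the sum of the generators $e_j$ of $V(\lfloor G_i\rfloor)$ (barycentric subdivision). *)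

theory Defs
  imports "HOL-Analysis.Analysis"
begin

text \<open>R^n is realised as real^'a: the coordinates indexed by the atoms carry the
 construction, all other coordinates are identically zero (a linear
 embedding of R^n = R^{atoms}).\<close>

definition is_atom :: "'a::complete_lattice \<Rightarrow> bool" where
  "is_atom a \<longleftrightarrow> a \<noteq> bot \<and> (\<forall>b. b \<le> a \<longrightarrow> b = bot \<or> b = a)"

definition atomic_lattice :: "'a::complete_lattice itself \<Rightarrow> bool" where
  "atomic_lattice _ \<longleftrightarrow> (\<forall>X::'a. X = Sup {a. is_atom a \<and> a \<le> X})"

definition atoms_below :: "'a::complete_lattice \<Rightarrow> 'a set" where
  "atoms_below X = {a. is_atom a \<and> a \<le> X}"

text \<open>Building set: for every X \<noteq> bot with M the maximal elements of G_{\<le>X},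
 there is a poset isomorphism from prod_{G\<in>M} [bot,G] (functions on M,
 extended by bot outside M, ordered componentwise) onto [bot,X] mapping the
 "unit vector" at G to G.\<close>
definition building_set :: "'a::complete_lattice set \<Rightarrow> bool" where
  "building_set \<G> \<longleftrightarrow> bot \<notin> \<G> \<and>
    (\<forall>X. X \<noteq> bot \<longrightarrow>
      (let M = {G \<in> \<G>. G \<le> X \<and> \<not>(\<exists>H\<in>\<G>. H \<le> X \<and> G < H)};
           P = {f. (\<forall>G\<in>M. f G \<le> G) \<and> (\<forall>G. G \<notin> M \<longrightarrow> f G = bot)}
       in \<exists>\<phi>. bij_betw \<phi> P {bot..X} \<and>
              (\<forall>f\<in>P. \<forall>g\<in>P. (\<forall>G\<in>M. f G \<le> g G) \<longleftrightarrow> \<phi> f \<le> \<phi> g) \<and>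
              (\<forall>G\<in>M. \<phi> (\<lambda>H. if H = G then G else bot) = G)))"

definition nested :: "'a::complete_lattice set \<Rightarrow> 'a set \<Rightarrow> bool" where
  "nested \<G> S \<longleftrightarrow> S \<subseteq> \<G> \<and>
    (\<forall>T \<subseteq> S. 2 \<le> card T \<and> (\<forall>G\<in>T. \<forall>H\<in>T. G \<noteq> H \<longrightarrow> \<not> G \<le> H)
        \<longrightarrow> Sup T \<notin> \<G>)"

definition vvec :: "'a::{finite,complete_lattice} \<Rightarrow> real^('a::{finite,complete_lattice})" where
  "vvec X = (\<chi> i. if is_atom i \<and> i \<le> X then 1 else 0)"

definition cone_span :: "'n::real_vector set \<Rightarrow> 'n set" where
  "cone_span W = {\<Sum>w\<in>W. c w *\<^sub>R w | c. \<forall>w\<in>W. 0 \<le> c w}"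

definition Vcone :: "'a::{finite,complete_lattice} set \<Rightarrow> (real^('a::{finite,complete_lattice})) set" where
  "Vcone S = cone_span (vvec ` S)"

definition faces :: "'n::real_vector set \<Rightarrow> 'n set set" where
  "faces \<sigma> = {\<rho>. \<rho> face_of \<sigma> \<and> \<rho> \<noteq> {}}"

definition add_ray :: "'n::real_vector set \<Rightarrow> 'n \<Rightarrow> 'n set" where
  "add_ray \<rho> v = {x + t *\<^sub>R v | x t. x \<in> \<rho> \<and> 0 \<le> t}"

definition stellar :: "'n::real_vector set set \<Rightarrow> 'n set \<Rightarrow> 'n \<Rightarrow> 'n set set" where
  "stellar \<Theta> \<tau> v =
     {\<sigma> \<in> \<Theta>. \<not> \<tau> face_of \<sigma>}
     \<union> {add_ray \<rho> v | \<sigma> \<rho>. \<sigma> \<in> \<Theta> \<and> \<tau> face_of \<sigma> \<and> \<rho> \<in> faces \<sigma> \<and> \<not> \<tau> \<subseteq> \<rho>}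
     \<union> {\<rho> | \<sigma> \<rho>. \<sigma> \<in> \<Theta> \<and> \<tau> face_of \<sigma> \<and> \<rho> \<in> faces \<sigma> \<and> \<not> \<tau> \<subseteq> \<rho>}"

definition Theta0 :: "'a::{finite,complete_lattice} itself \<Rightarrow> (real^('a::{finite,complete_lattice})) set set" where
  "Theta0 _ = faces (cone_span {axis a 1 | a::'a. is_atom a})"

text \<open>\<Theta>~ for the order given by the list gs = [G_1, ..., G_t] (G_1 first).\<close>
definition Theta_tilde :: "'a::{finite,complete_lattice} list \<Rightarrow> (real^('a::{finite,complete_lattice})) set set" where
  "Theta_tilde gs = fold (\<lambda>G \<Theta>. stellar \<Theta> (Vcone (atoms_below G)) (vvec G)) gs (Theta0 TYPE('a))"

definition Theta :: "'a::{finite,complete_lattice} set \<Rightarrow> 'a list \<Rightarrow> (real^('a::{finite,complete_lattice})) set set" where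
  "Theta \<G> gs = Theta_tilde gs - {Vcone T | T. T \<subseteq> \<G> \<and> \<not> nested \<G> T}"

definition Sigma_fan :: "'a::{finite,complete_lattice} set \<Rightarrow> (real^('a::{finite,complete_lattice})) set set" where
  "Sigma_fan \<G> = {Vcone S | S. nested \<G> S}"

end

theory Submission
  imports Defs
begin

text \<open>Every cone produced by the construction is simplicial: it is \<open>V(C)\<close> for a label set
  \<open>C \<subseteq> \<G>\<close> whose vectors \<open>v\<^sub>X\<close> are linearly independent. Its faces are then the \<open>V(\<rho>)\<close>
  with \<open>\<rho> \<subseteq> C\<close>, and \<open>V(\<lfloor>G\<rfloor>)\<close> is one of them exactly when \<open>\<lfloor>G\<rfloor> \<subseteq> C\<close>. Hence each stellar
  subdivision acts on label sets: \<open>C \<supseteq> \<lfloor>G\<rfloor>\<close> is replaced by all \<open>\<rho>\<close> and \<open>\<rho> \<union> {G}\<close> with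
  \<open>\<rho> \<subseteq> C\<close> not containing \<open>\<lfloor>G\<rfloor>\<close>; since \<open>v\<^sub>G\<close> is the sum of the \<open>v\<^sub>a\<close> over the atoms \<open>a \<le> G\<close>,
  the generators stay independent.

  Processing \<open>\<G>\<close> from larger to smaller elements, every set that is nested for the atoms and
  the elements processed so far occurs as a label set: if it contains the current \<open>G\<close>, it
  arises from the nested set \<open>(S - {G}) \<union> \<lfloor>G\<rfloor>\<close> of the previous stage. This uses that a
  building set contains the join of any two of its members that meet, and that all elements
  above \<open>G\<close> have already been processed. Finally, no cone \<open>V(S)\<close> with \<open>S\<close> nested is removed
  in step (2): if \<open>v\<^sub>H \<in> V(S)\<close> with \<open>H \<in> \<G>\<close>, then \<open>H\<close> is a join of members of \<open>S\<close>, so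
  \<open>H \<in> S\<close> by nestedness.\<close>

section \<open>Cones spanned by finitely many vectors\<close>

lemma convex_cone_cone_span: "convex_cone (cone_span W)"
  unfolding convex_cone_iff cone_span_def
proof (intro conjI ballI allI impI)
  show "0 \<in> {\<Sum>w\<in>W. c w *\<^sub>R w |c. \<forall>w\<in>W. 0 \<le> c w}"
    by (intro CollectI exI[of _ "\<lambda>_. 0"]) auto
next
  fix x y assume "x \<in> {\<Sum>w\<in>W. c w *\<^sub>R w |c. \<forall>w\<in>W. 0 \<le> c w}"
    and "y \<in> {\<Sum>w\<in>W. c w *\<^sub>R w |c. \<forall>w\<in>W. 0 \<le> c w}"
  then obtain c d where "x = (\<Sum>w\<in>W. c w *\<^sub>R w)" "\<forall>w\<in>W. 0 \<le> c w"
    and "y = (\<Sum>w\<in>W. d w *\<^sub>R w)" "\<forall>w\<in>W. 0 \<le> d w" by auto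
  then show "x + y \<in> {\<Sum>w\<in>W. c w *\<^sub>R w |c. \<forall>w\<in>W. 0 \<le> c w}"
    by (intro CollectI exI[of _ "\<lambda>w. c w + d w"]) (auto simp: sum.distrib scaleR_add_left)
next
  fix x and a :: real assume "x \<in> {\<Sum>w\<in>W. c w *\<^sub>R w |c. \<forall>w\<in>W. 0 \<le> c w}" "0 \<le> a"
  then obtain c where "x = (\<Sum>w\<in>W. c w *\<^sub>R w)" "\<forall>w\<in>W. 0 \<le> c w" by auto
  then show "a *\<^sub>R x \<in> {\<Sum>w\<in>W. c w *\<^sub>R w |c. \<forall>w\<in>W. 0 \<le> c w}"
    using \<open>0 \<le> a\<close> by (intro CollectI exI[of _ "\<lambda>w. a * c w"]) (auto simp: scaleR_sum_right)
qed

lemma cone_span_subset_convex_cone: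
  assumes "convex_cone S" and "W \<subseteq> S"
  shows "cone_span W \<subseteq> S"
proof
  fix x assume "x \<in> cone_span W"
  then obtain c where x: "x = (\<Sum>w\<in>W. c w *\<^sub>R w)" and c: "\<forall>w\<in>W. 0 \<le> c w"
    by (auto simp: cone_span_def)
  have "(\<Sum>w\<in>W'. c w *\<^sub>R w) \<in> S" if "finite W'" "W' \<subseteq> W" for W'
    using that
  proof (induction W' rule: finite_induct)
    case empty then show ?case using assms(1) by (simp add: convex_cone_contains_0)
  next
    case (insert w W')
    then show ?case
      using assms c by (auto intro: convex_cone_add convex_cone_scaleR)
  qed
  \<comment> \<open>for infinite \<open>W\<close> the sum is \<open>0\<close> by convention\<close>
  then show "x \<in> S"
    using x assms(1) by (cases "finite W") (auto simp: convex_cone_contains_0)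
qed

lemma cone_span_inc:
  assumes "finite W" and "w \<in> W"
  shows "w \<in> cone_span W"
proof -
  have "(\<Sum>v\<in>W. (if v = w then 1 else 0) *\<^sub>R v) = (\<Sum>v\<in>W. if v = w then w else 0)"
    by (rule sum.cong) auto
  also have "\<dots> = w"
    using assms by simp
  finally have "(\<Sum>v\<in>W. (if v = w then 1 else 0) *\<^sub>R v) = w" .
  then show ?thesis
    unfolding cone_span_def by (intro CollectI exI[of _ "\<lambda>v. if v = w then 1 else 0"]) auto
qed

lemma cone_span_mono:
  assumes "finite W" and "V \<subseteq> W"
  shows "cone_span V \<subseteq> cone_span W"
  using assms by (intro cone_span_subset_convex_cone convex_cone_cone_span)
    (auto intro: cone_span_inc)

lemma sum_mem_cone_span_support:
  assumes "finite W" and "D \<subseteq> W" and "\<forall>w\<in>W. 0 \<le> c w" and "\<forall>w\<in>W - D. c w = 0"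
  shows "(\<Sum>w\<in>W. c w *\<^sub>R w) \<in> cone_span D"
proof -
  have "(\<Sum>w\<in>W. c w *\<^sub>R w) = (\<Sum>w\<in>D. c w *\<^sub>R w)"
    using assms by (intro sum.mono_neutral_right) auto
  then show ?thesis
    using assms unfolding cone_span_def by auto
qed

lemma independent_sum_coeffs_eq:
  assumes "independent W" and "finite W"
    and "(\<Sum>w\<in>W. c w *\<^sub>R w) = (\<Sum>w\<in>W. d w *\<^sub>R w)" and "w \<in> W"
  shows "c w = d w"
proof -
  have "(\<Sum>w\<in>W. (c w - d w) *\<^sub>R w) = 0"
    using assms(3) by (simp add: scaleR_diff_left sum_subtractf)
  then show ?thesis
    using independentD[OF assms(1,2) order_refl _ assms(4), of "\<lambda>w. c w - d w"] by simp
qed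

lemma face_of_convex_cone_summand:
  assumes F: "F face_of K" and K: "convex_cone K" and "y + z \<in> F" "y \<in> K" "z \<in> K"
  shows "y \<in> F"
proof -
  have conic: "conic F"
    using face_of_conic[OF _ F] K by (simp add: convex_cone_def)
  show ?thesis
  proof (cases "y = z")
    case True
    then have "y = (1/2) *\<^sub>R (y + z)" by (simp add: scaleR_2[symmetric])
    then show ?thesis using conic \<open>y + z \<in> F\<close> by (metis conic_mul zero_le_divide_1_iff zero_le_numeral)
  next
    case False
    have "y + z \<in> open_segment (2 *\<^sub>R y) (2 *\<^sub>R z)"
      unfolding in_segment using False
      by (intro conjI exI[of _ "1/2"]) (auto simp: scaleR_add_right)
    moreover have "2 *\<^sub>R y \<in> K" "2 *\<^sub>R z \<in> K"
      using K \<open>y \<in> K\<close> \<open>z \<in> K\<close> by (auto intro: convex_cone_scaleR)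
    ultimately have "2 *\<^sub>R y \<in> F" using face_ofD[OF F] \<open>y + z \<in> F\<close> by blast
    then show ?thesis using conic_mul[OF conic _, of "2 *\<^sub>R y" "1/2"] by simp
  qed
qed

lemma cone_span_face_of:
  assumes fin: "finite W" and ind: "independent W" and DW: "D \<subseteq> W"
  shows "cone_span D face_of cone_span W"
  unfolding face_of_def
proof (intro conjI ballI impI)
  show "cone_span D \<subseteq> cone_span W" using cone_span_mono[OF fin DW] .
  show "convex (cone_span D)" using convex_cone_cone_span[of D] by (simp add: convex_cone_def)
next
  fix a b x assume "a \<in> cone_span W" "b \<in> cone_span W" "x \<in> cone_span D"
    and seg: "x \<in> open_segment a b"
  then obtain \<alpha> \<beta> \<gamma> where \<alpha>: "a = (\<Sum>w\<in>W. \<alpha> w *\<^sub>R w)" "\<forall>w\<in>W. 0 \<le> \<alpha> w"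
    and \<beta>: "b = (\<Sum>w\<in>W. \<beta> w *\<^sub>R w)" "\<forall>w\<in>W. 0 \<le> \<beta> w"
    and \<gamma>: "x = (\<Sum>w\<in>D. \<gamma> w *\<^sub>R w)"
    by (auto simp: cone_span_def)
  obtain u where u: "0 < u" "u < 1" "x = (1 - u) *\<^sub>R a + u *\<^sub>R b"
    using seg unfolding in_segment by auto
  have "(\<Sum>w\<in>W. (if w \<in> D then \<gamma> w else 0) *\<^sub>R w) = x"
    unfolding \<gamma> using fin DW by (intro sum.mono_neutral_cong_right) auto
  also have "x = (\<Sum>w\<in>W. ((1 - u) * \<alpha> w + u * \<beta> w) *\<^sub>R w)"
    by (simp add: u(3) \<alpha>(1) \<beta>(1) scaleR_sum_right sum.distrib scaleR_add_left)
  finally have "\<forall>w\<in>W. (if w \<in> D then \<gamma> w else 0) = (1 - u) * \<alpha> w + u * \<beta> w"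
    by (intro ballI independent_sum_coeffs_eq[OF ind fin])
  then have "\<forall>w\<in>W - D. \<alpha> w = 0 \<and> \<beta> w = 0"
    using \<alpha>(2) \<beta>(2) u by (auto simp: add_nonneg_eq_0_iff)
  then show "a \<in> cone_span D" "b \<in> cone_span D"
    using \<alpha> \<beta> fin DW by (auto intro: sum_mem_cone_span_support)
qed

lemma convex_cone_face_of:
  assumes "F face_of K" and "convex_cone K" and "F \<noteq> {}"
  shows "convex_cone F"
  using assms face_of_conic[of K F] face_of_imp_convex[of F K] by (simp add: convex_cone_def)

lemma face_of_cone_span_eq:
  assumes fin: "finite W" and F: "F face_of cone_span W" "F \<noteq> {}"
  shows "F = cone_span (W \<inter> F)"
proof
  have K: "convex_cone (cone_span W)" by (rule convex_cone_cone_span)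
  show "cone_span (W \<inter> F) \<subseteq> F"
    using convex_cone_face_of[OF F(1) K F(2)] by (intro cone_span_subset_convex_cone) auto
  show "F \<subseteq> cone_span (W \<inter> F)"
  proof
    fix x assume x: "x \<in> F"
    then obtain c where c: "x = (\<Sum>w\<in>W. c w *\<^sub>R w)" "\<forall>w\<in>W. 0 \<le> c w"
      using face_of_imp_subset[OF F(1)] by (auto simp: cone_span_def)
    \<comment> \<open>a generator with positive coefficient is a summand of \<open>x\<close>, hence lies in \<open>F\<close>\<close>
    have "c w = 0" if w: "w \<in> W - F" for w
    proof (rule ccontr)
      assume "c w \<noteq> 0"
      have "c w *\<^sub>R w + (\<Sum>v\<in>W - {w}. c v *\<^sub>R v) \<in> F"
        using x c(1) sum.remove[OF fin, of w "\<lambda>v. c v *\<^sub>R v"] w by simp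
      moreover have "c w *\<^sub>R w \<in> cone_span W"
        using w c(2) K cone_span_inc[OF fin] by (auto intro: convex_cone_scaleR)
      moreover have "(\<Sum>v\<in>W - {w}. c v *\<^sub>R v) \<in> cone_span (W - {w})"
        using c(2) unfolding cone_span_def by blast
      then have "(\<Sum>v\<in>W - {w}. c v *\<^sub>R v) \<in> cone_span W"
        using cone_span_mono[OF fin, of "W - {w}"] by blast
      ultimately have "c w *\<^sub>R w \<in> F"
        by (rule face_of_convex_cone_summand[OF F(1) K])
      moreover have "0 \<le> 1 / c w" using c(2) w by simp
      ultimately have "(1 / c w) *\<^sub>R (c w *\<^sub>R w) \<in> F"
        using convex_cone_face_of[OF F(1) K F(2)] convex_cone_scaleR by blast
      then show False using w \<open>c w \<noteq> 0\<close> by simp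
    qed
    then show "x \<in> cone_span (W \<inter> F)"
      unfolding c(1) using fin c(2) by (intro sum_mem_cone_span_support) auto
  qed
qed

lemma faces_cone_span:
  assumes fin: "finite W" and ind: "independent W"
  shows "faces (cone_span W) = cone_span ` Pow W"
proof
  show "cone_span ` Pow W \<subseteq> faces (cone_span W)"
    using cone_span_face_of[OF fin ind] convex_cone_nonempty[OF convex_cone_cone_span]
    by (auto simp: faces_def)
  show "faces (cone_span W) \<subseteq> cone_span ` Pow W"
  proof
    fix F assume "F \<in> faces (cone_span W)"
    then have "F = cone_span (W \<inter> F)"
      using face_of_cone_span_eq[OF fin] by (auto simp: faces_def)
    then show "F \<in> cone_span ` Pow W" by blast
  qed
qed

lemma add_ray_cone_span:
  assumes "finite W"
  shows "add_ray (cone_span W) v = cone_span (insert v W)"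
proof
  show "add_ray (cone_span W) v \<subseteq> cone_span (insert v W)"
    using assms cone_span_mono[of "insert v W" W] cone_span_inc[of "insert v W" v]
      convex_cone_cone_span[of "insert v W"]
    by (auto simp: add_ray_def intro!: convex_cone_add convex_cone_scaleR)
next
  show "cone_span (insert v W) \<subseteq> add_ray (cone_span W) v"
  proof
    fix y assume y: "y \<in> cone_span (insert v W)"
    show "y \<in> add_ray (cone_span W) v"
    proof (cases "v \<in> W")
      case True
      then have "y = y + 0 *\<^sub>R v" "y \<in> cone_span W" using y insert_absorb by fastforce+
      then show ?thesis unfolding add_ray_def by blast
    next
      case False
      obtain c where c: "y = (\<Sum>w\<in>insert v W. c w *\<^sub>R w)" "\<forall>w\<in>insert v W. 0 \<le> c w"
        using y by (auto simp: cone_span_def)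
      then have "y = (\<Sum>w\<in>W. c w *\<^sub>R w) + c v *\<^sub>R v" "0 \<le> c v"
        using False assms by (simp_all add: add.commute)
      moreover have "(\<Sum>w\<in>W. c w *\<^sub>R w) \<in> cone_span W"
        using c(2) by (auto simp: cone_span_def)
      ultimately show ?thesis unfolding add_ray_def by blast
    qed
  qed
qed

section \<open>Atoms and the vectors \<open>v\<^sub>X\<close>\<close>

lemma is_atom_le_eq: "is_atom a \<Longrightarrow> is_atom b \<Longrightarrow> a \<le> b \<Longrightarrow> a = b"
  unfolding is_atom_def by blast

lemma atoms_below_atom: "is_atom a \<Longrightarrow> atoms_below a = {a}"
  unfolding atoms_below_def using is_atom_le_eq by blast

lemma atomic_Sup_atoms_below: "atomic_lattice TYPE('a::complete_lattice) \<Longrightarrow> Sup (atoms_below X) = (X::'a)"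
  unfolding atomic_lattice_def atoms_below_def by (metis (no_types))

lemma atomic_le_iff_atoms_below:
  assumes "atomic_lattice TYPE('a::complete_lattice)"
  shows "(X::'a) \<le> Y \<longleftrightarrow> atoms_below X \<subseteq> atoms_below Y"
proof
  assume "atoms_below X \<subseteq> atoms_below Y"
  then show "X \<le> Y"
    using Sup_subset_mono atomic_Sup_atoms_below[OF assms] by metis
qed (auto simp: atoms_below_def)

lemma atomic_ex_atom_le:
  assumes "atomic_lattice TYPE('a::complete_lattice)" and "(X::'a) \<noteq> bot"
  shows "\<exists>a. is_atom a \<and> a \<le> X"
proof (rule ccontr)
  assume "\<nexists>a. is_atom a \<and> a \<le> X"
  then have "atoms_below X = {}" by (simp add: atoms_below_def)
  then show False using atomic_Sup_atoms_below[OF assms(1), of X] assms(2) by simp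
qed

lemma card_atoms_below_ge_2:
  assumes "atomic_lattice TYPE('a::{finite,complete_lattice})" and "(G::'a) \<noteq> bot" and "\<not> is_atom G"
  shows "2 \<le> card (atoms_below G)"
proof -
  obtain a where a: "a \<in> atoms_below G"
    using atomic_ex_atom_le[OF assms(1,2)] by (auto simp: atoms_below_def)
  have "atoms_below G \<noteq> {a}"
  proof
    assume "atoms_below G = {a}"
    then have "G = a" using atomic_Sup_atoms_below[OF assms(1), of G] by simp
    then show False using a assms(3) by (simp add: atoms_below_def)
  qed
  then obtain b where "b \<in> atoms_below G" "b \<noteq> a" using a by blast
  then have "card {a, b} \<le> card (atoms_below G)" using a by (intro card_mono) auto
  then show ?thesis using \<open>b \<noteq> a\<close> by simp
qed

lemma vvec_nth [simp]: "vvec X $ i = (if is_atom i \<and> i \<le> X then 1 else 0)"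
  by (simp add: vvec_def)

lemma vvec_atom: "is_atom a \<Longrightarrow> vvec a = axis a 1"
  by (auto simp: vec_eq_iff axis_def dest: is_atom_le_eq)

lemma independent_vvec_atoms:
  assumes "C \<subseteq> {a. is_atom a}"
  shows "independent (vvec ` C)"
proof -
  have "vvec ` C \<subseteq> Basis"
    using assms vvec_atom by (force simp: Basis_vec_def)
  then show ?thesis using independent_Basis independent_mono by blast
qed

lemma vvec_eq_sum_atoms: "vvec G = (\<Sum>a\<in>atoms_below G. vvec a)"
proof -
  have "(\<Sum>a\<in>atoms_below G. vvec a $ i) = (\<Sum>a\<in>atoms_below G. if a = i then 1 else 0)" for i
    by (rule sum.cong) (auto simp: atoms_below_def dest: is_atom_le_eq)
  then show ?thesis
    by (simp add: vec_eq_iff sum_component sum.delta' atoms_below_def)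
qed

lemma inj_vvec:
  assumes "atomic_lattice TYPE('a::{finite,complete_lattice})"
  shows "inj (vvec :: 'a \<Rightarrow> _)"
proof
  fix X Y :: 'a assume "vvec X = vvec Y"
  then have "(is_atom i \<and> i \<le> X) \<longleftrightarrow> (is_atom i \<and> i \<le> Y)" for i
    unfolding vec_eq_iff by (metis vvec_nth zero_neq_one)
  then have "atoms_below X = atoms_below Y"
    unfolding atoms_below_def by blast
  then show "X = Y"
    using atomic_le_iff_atoms_below[OF assms] by (metis order_antisym order_refl)
qed

lemma mem_Vcone_iff:
  assumes "atomic_lattice TYPE('a::{finite,complete_lattice})"
  shows "x \<in> Vcone (C::'a set) \<longleftrightarrow> (\<exists>c. x = (\<Sum>H\<in>C. c H *\<^sub>R vvec H) \<and> (\<forall>H\<in>C. 0 \<le> c H))"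
proof -
  have inj: "inj_on vvec C" using inj_vvec[OF assms] by (rule inj_on_subset) simp
  have reindex: "(\<Sum>w\<in>vvec ` C. d w *\<^sub>R w) = (\<Sum>H\<in>C. d (vvec H) *\<^sub>R vvec H)" for d
    using inj by (simp add: sum.reindex)
  show ?thesis
  proof
    assume "x \<in> Vcone C"
    then obtain d where "x = (\<Sum>w\<in>vvec ` C. d w *\<^sub>R w)" "\<forall>w\<in>vvec ` C. 0 \<le> d w"
      unfolding Vcone_def cone_span_def by blast
    then show "\<exists>c. x = (\<Sum>H\<in>C. c H *\<^sub>R vvec H) \<and> (\<forall>H\<in>C. 0 \<le> c H)"
      unfolding reindex by auto
  next
    assume "\<exists>c. x = (\<Sum>H\<in>C. c H *\<^sub>R vvec H) \<and> (\<forall>H\<in>C. 0 \<le> c H)"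
    then obtain c where c: "x = (\<Sum>H\<in>C. c H *\<^sub>R vvec H)" "\<forall>H\<in>C. 0 \<le> c H" by blast
    define d where "d w = c (inv_into C vvec w)" for w
    have "d (vvec H) = c H" if "H \<in> C" for H
      using inv_into_f_f[OF inj that] by (simp add: d_def)
    then have "x = (\<Sum>w\<in>vvec ` C. d w *\<^sub>R w)" "\<forall>w\<in>vvec ` C. 0 \<le> d w"
      using c unfolding reindex by auto
    then show "x \<in> Vcone C"
      unfolding Vcone_def cone_span_def by blast
  qed
qed

lemma vvec_in_Vcone: "H \<in> C \<Longrightarrow> vvec H \<in> Vcone C"
  unfolding Vcone_def by (rule cone_span_inc) auto

lemma Vcone_nonempty: "Vcone C \<noteq> {}"
  unfolding Vcone_def by (rule convex_cone_nonempty[OF convex_cone_cone_span])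

lemma Vcone_mono: "D \<subseteq> C \<Longrightarrow> Vcone D \<subseteq> Vcone C"
  unfolding Vcone_def by (rule cone_span_mono) auto

lemma faces_Vcone:
  assumes "independent (vvec ` C)"
  shows "faces (Vcone C) = Vcone ` Pow C"
  unfolding Vcone_def faces_cone_span[OF finite_imageI[OF finite] assms]
  by (auto simp: image_image subset_image_iff)

lemma add_ray_Vcone: "add_ray (Vcone D) (vvec G) = Vcone (insert G D)"
  unfolding Vcone_def by (simp add: add_ray_cone_span)

lemma vvec_comb_nth:
  "is_atom i \<Longrightarrow> (\<Sum>H\<in>C. c H *\<^sub>R vvec H) $ i = (\<Sum>H\<in>{H\<in>C. i \<le> H}. c H)"
  by (simp add: sum_component sum.inter_filter if_distrib cong: if_cong)

text \<open>Reading off coordinates atomwise, the generators with nonzero coefficient lie below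
  \<open>H\<close> and cover all atoms of \<open>H\<close>.\<close>
lemma vvec_in_Vcone_imp_Sup:
  assumes at: "atomic_lattice TYPE('a::{finite,complete_lattice})" and "vvec H \<in> Vcone (C::'a set)"
  obtains S where "S \<subseteq> C" and "H = Sup S"
proof -
  obtain c where c: "vvec H = (\<Sum>G\<in>C. c G *\<^sub>R vvec G)" "\<forall>G\<in>C. 0 \<le> c G"
    using assms mem_Vcone_iff by blast
  define S where "S = {G\<in>C. c G \<noteq> 0}"
  have coord: "b \<le> H \<longleftrightarrow> (\<exists>G\<in>S. b \<le> G)" if "is_atom b" for b
  proof -
    have "vvec H $ b = (\<Sum>G\<in>{G\<in>C. b \<le> G}. c G)"
      unfolding c(1) by (rule vvec_comb_nth[OF that])
    then have "(if b \<le> H then 1 else 0) = (\<Sum>G\<in>{G\<in>C. b \<le> G}. c G)"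
      using that by simp
    then have "b \<le> H \<longleftrightarrow> (\<Sum>G\<in>{G\<in>C. b \<le> G}. c G) \<noteq> 0"
      by (auto split: if_splits)
    also have "\<dots> \<longleftrightarrow> (\<exists>G\<in>S. b \<le> G)"
      using c(2) by (subst sum_nonneg_eq_0_iff) (auto simp: S_def)
    finally show ?thesis .
  qed
  have "Sup S \<le> H"
  proof (rule Sup_least)
    fix G assume "G \<in> S"
    then show "G \<le> H"
      unfolding atomic_le_iff_atoms_below[OF at] using coord by (auto simp: atoms_below_def)
  qed
  moreover have "H \<le> Sup S"
    unfolding atomic_le_iff_atoms_below[OF at]
  proof
    fix b assume "b \<in> atoms_below H"
    then obtain G where "G \<in> S" "b \<le> G" "is_atom b"
      using coord by (auto simp: atoms_below_def)
    then show "b \<in> atoms_below (Sup S)"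
      using order_trans[OF \<open>b \<le> G\<close> Sup_upper[OF \<open>G \<in> S\<close>]] by (simp add: atoms_below_def)
  qed
  ultimately have "H = Sup S" by (rule order_antisym[rotated])
  then show thesis
    using that[of S] by (auto simp: S_def)
qed

lemma atom_mem_if_vvec_in_Vcone:
  assumes at: "atomic_lattice TYPE('a::{finite,complete_lattice})"
    and "bot \<notin> (C::'a set)" and "is_atom a" and "vvec a \<in> Vcone C"
  shows "a \<in> C"
proof -
  obtain S where S: "S \<subseteq> C" "a = Sup S"
    using vvec_in_Vcone_imp_Sup[OF at assms(4)] by blast
  then obtain G where G: "G \<in> S"
    using \<open>is_atom a\<close> by (auto simp: is_atom_def)
  have "G \<le> a" using S(2) Sup_upper[OF G] by simp
  moreover have "G \<noteq> bot" using G S(1) assms(2) by blast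
  ultimately have "G = a" using assms(3) unfolding is_atom_def by blast
  then show ?thesis using G S(1) by blast
qed

lemma Vcone_atoms_below_subset_iff:
  assumes "atomic_lattice TYPE('a::{finite,complete_lattice})" and "bot \<notin> (D::'a set)"
  shows "Vcone (atoms_below G) \<subseteq> Vcone D \<longleftrightarrow> atoms_below G \<subseteq> D"
proof
  assume sub: "Vcone (atoms_below G) \<subseteq> Vcone D"
  show "atoms_below G \<subseteq> D"
  proof
    fix a assume a: "a \<in> atoms_below G"
    then have "vvec a \<in> Vcone D" using sub vvec_in_Vcone by blast
    then show "a \<in> D"
      using atom_mem_if_vvec_in_Vcone[OF assms] a by (simp add: atoms_below_def)
  qed
qed (rule Vcone_mono)

lemma Vcone_atoms_below_face_of_iff:
  assumes "atomic_lattice TYPE('a::{finite,complete_lattice})" and "bot \<notin> (C::'a set)"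
    and "independent (vvec ` C)"
  shows "Vcone (atoms_below G) face_of Vcone C \<longleftrightarrow> atoms_below G \<subseteq> C"
proof
  assume "Vcone (atoms_below G) face_of Vcone C"
  then have "Vcone (atoms_below G) \<in> faces (Vcone C)"
    unfolding faces_def using Vcone_nonempty by blast
  then obtain D where "D \<subseteq> C" "Vcone (atoms_below G) = Vcone D"
    unfolding faces_Vcone[OF assms(3)] by blast
  then show "atoms_below G \<subseteq> C"
    using Vcone_atoms_below_subset_iff[OF assms(1), of D G] assms(2) by blast
next
  assume "atoms_below G \<subseteq> C"
  then have "Vcone (atoms_below G) \<in> faces (Vcone C)"
    unfolding faces_Vcone[OF assms(3)] by blast
  then show "Vcone (atoms_below G) face_of Vcone C"
    unfolding faces_def by blast
qed

section \<open>Nested sets and building sets\<close>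

lemma nestedD_subset: "nested \<G> S \<Longrightarrow> S \<subseteq> \<G>"
  unfolding nested_def by blast

lemma nestedD:
  "nested \<G> S \<Longrightarrow> T \<subseteq> S \<Longrightarrow> 2 \<le> card T \<Longrightarrow> \<forall>G\<in>T. \<forall>H\<in>T. G \<noteq> H \<longrightarrow> \<not> G \<le> H
    \<Longrightarrow> Sup T \<notin> \<G>"
  unfolding nested_def by blast

lemma nestedI:
  assumes "S \<subseteq> \<G>"
    and "\<And>T. T \<subseteq> S \<Longrightarrow> 2 \<le> card T \<Longrightarrow> \<forall>G\<in>T. \<forall>H\<in>T. G \<noteq> H \<longrightarrow> \<not> G \<le> H
      \<Longrightarrow> Sup T \<notin> \<G>"
  shows "nested \<G> S"
  using assms unfolding nested_def by blast

lemma nested_subset: "nested \<G> S \<Longrightarrow> T \<subseteq> S \<Longrightarrow> nested \<G> T"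
  by (intro nestedI) (auto dest: nestedD_subset nestedD)

lemma nested_building_subset: "nested \<G> S \<Longrightarrow> S \<subseteq> \<G>' \<Longrightarrow> \<G>' \<subseteq> \<G> \<Longrightarrow> nested \<G>' S"
  by (intro nestedI) (auto dest: nestedD)

text \<open>The maximal elements of \<open>T\<close> form an antichain with the same join.\<close>
lemma Sup_mem_nested:
  fixes S :: "'a::{finite,complete_lattice} set"
  assumes N: "nested \<G> S" and "bot \<notin> \<G>" and "T \<subseteq> S" and "Sup T \<in> \<G>"
  shows "Sup T \<in> S"
proof -
  define M where "M = {G\<in>T. \<forall>G'\<in>T. G \<le> G' \<longrightarrow> G = G'}"
  have below_M: "\<exists>m\<in>M. G \<le> m" if "G \<in> T" for G
    using finite_has_maximal2[OF finite that] unfolding M_def by blast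
  have "Sup M = Sup T"
  proof (rule order_antisym)
    show "Sup M \<le> Sup T" by (rule Sup_subset_mono) (auto simp: M_def)
    show "Sup T \<le> Sup M"
      by (rule Sup_least) (meson below_M Sup_upper order_trans)
  qed
  have "T \<noteq> {}" using assms(2,4) by auto
  then have "0 < card M" using below_M by (auto simp: card_gt_0_iff)
  moreover have "\<not> 2 \<le> card M"
  proof
    assume "2 \<le> card M"
    moreover have "\<forall>G\<in>M. \<forall>H\<in>M. G \<noteq> H \<longrightarrow> \<not> G \<le> H" unfolding M_def by blast
    moreover have "M \<subseteq> S" using \<open>T \<subseteq> S\<close> unfolding M_def by blast
    ultimately have "Sup M \<notin> \<G>" using nestedD[OF N] by blast
    then show False using \<open>Sup M = Sup T\<close> \<open>Sup T \<in> \<G>\<close> by simp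
  qed
  ultimately have "card M = 1" by simp
  then obtain m where "M = {m}" by (rule card_1_singletonE)
  then show ?thesis
    using \<open>Sup M = Sup T\<close> \<open>T \<subseteq> S\<close> unfolding M_def by auto
qed

lemma mem_nested_if_vvec_in_Vcone:
  assumes "atomic_lattice TYPE('a::{finite,complete_lattice})" and "bot \<notin> \<G>"
    and "nested \<G> (S::'a set)" and "H \<in> \<G>" and "vvec H \<in> Vcone S"
  shows "H \<in> S"
proof -
  obtain T where "T \<subseteq> S" and "H = Sup T"
    using vvec_in_Vcone_imp_Sup[OF assms(1,5)] .
  then show ?thesis using Sup_mem_nested[OF assms(3,2)] assms(4) by simp
qed

definition maximal_below :: "'a::order set \<Rightarrow> 'a \<Rightarrow> 'a set" where
  "maximal_below \<G> X = {G \<in> \<G>. G \<le> X \<and> \<not> (\<exists>H\<in>\<G>. H \<le> X \<and> G < H)}"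

lemma ex_maximal_below:
  fixes \<G> :: "'a::{finite,order} set"
  assumes "K \<in> \<G>" and "K \<le> X"
  shows "\<exists>m\<in>maximal_below \<G> X. K \<le> m"
proof -
  obtain m where "m \<in> {H \<in> \<G>. H \<le> X}" "K \<le> m" "\<forall>H\<in>{H \<in> \<G>. H \<le> X}. m \<le> H \<longrightarrow> m = H"
    using finite_has_maximal2[of "{H \<in> \<G>. H \<le> X}" K] assms by auto
  then show ?thesis unfolding maximal_below_def by (auto simp: less_le)
qed

definition building_product :: "'a::complete_lattice set \<Rightarrow> 'a \<Rightarrow> ('a \<Rightarrow> 'a) set" where
  "building_product \<G> X =
    {f. (\<forall>G\<in>maximal_below \<G> X. f G \<le> G) \<and> (\<forall>G. G \<notin> maximal_below \<G> X \<longrightarrow> f G = bot)}"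

lemma building_setD_bot: "building_set \<G> \<Longrightarrow> bot \<notin> \<G>"
  unfolding building_set_def by blast

lemma building_setD_iso:
  assumes "building_set \<G>" and "X \<noteq> bot"
  obtains \<phi> where "bij_betw \<phi> (building_product \<G> X) {bot..X}"
    and "\<And>f g. f \<in> building_product \<G> X \<Longrightarrow> g \<in> building_product \<G> X \<Longrightarrow>
      (\<forall>G\<in>maximal_below \<G> X. f G \<le> g G) \<longleftrightarrow> \<phi> f \<le> \<phi> g"
    and "\<And>G. G \<in> maximal_below \<G> X \<Longrightarrow> \<phi> (\<lambda>H. if H = G then G else bot) = G"
    and "\<phi> (\<lambda>_. bot) = bot"
proof -
  note iso = mp[OF spec[OF conjunct2[OF assms(1)[unfolded building_set_def]], of X] assms(2)]
  then obtain \<phi> where bij: "bij_betw \<phi> (building_product \<G> X) {bot..X}"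
    and ord: "\<forall>f\<in>building_product \<G> X. \<forall>g\<in>building_product \<G> X.
      (\<forall>G\<in>maximal_below \<G> X. f G \<le> g G) \<longleftrightarrow> \<phi> f \<le> \<phi> g"
    and unit: "\<forall>G\<in>maximal_below \<G> X. \<phi> (\<lambda>H. if H = G then G else bot) = G"
    unfolding Let_def by (fold maximal_below_def building_product_def) blast
  have "bot \<in> {bot..X}" by simp
  then obtain h where h: "h \<in> building_product \<G> X" "\<phi> h = bot"
    using bij unfolding bij_betw_def by (metis imageE)
  moreover have "(\<lambda>_. bot) \<in> building_product \<G> X"
    by (simp add: building_product_def)
  ultimately have "\<phi> (\<lambda>_. bot) \<le> \<phi> h" using ord[rule_format, of "\<lambda>_. bot" h] by simp
  then have "\<phi> (\<lambda>_. bot) = bot" using h(2) by (simp add: bot_unique)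
  then show thesis using that bij ord unit by blast
qed

lemma atom_mem_building_set:
  assumes bs: "building_set \<G>" and a: "is_atom a"
  shows "a \<in> \<G>"
proof (cases "maximal_below \<G> a = {}")
  case True
  have "a \<noteq> bot" using a by (simp add: is_atom_def)
  then obtain \<phi> where "bij_betw \<phi> (building_product \<G> a) {bot..a}"
    by (rule building_setD_iso[OF bs])
  moreover have "building_product \<G> a = {\<lambda>_. bot}"
    unfolding building_product_def True by auto
  ultimately have "{bot..a} = {\<phi> (\<lambda>_. bot)}"
    by (simp add: bij_betw_def)
  then have "bot = a" by (metis atLeastAtMost_iff order_refl bot.extremum singletonD)
  then show ?thesis using \<open>a \<noteq> bot\<close> by simp
next
  case False
  then obtain G where G: "G \<in> \<G>" "G \<le> a" unfolding maximal_below_def by auto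
  moreover have "G \<noteq> bot" using G building_setD_bot[OF bs] by blast
  ultimately show ?thesis using a unfolding is_atom_def by blast
qed

text \<open>Elements below different maximal elements of \<open>\<G>\<^sub>\<le>\<^sub>X\<close> lie in different
  factors of the product decomposition of \<open>[bot, X]\<close>, hence meet in \<open>bot\<close>.\<close>
lemma building_set_inf_eq_bot:
  fixes \<G> :: "'a::complete_lattice set"
  assumes bs: "building_set \<G>" and "X \<noteq> bot"
    and m: "m\<^sub>1 \<in> maximal_below \<G> X" "m\<^sub>2 \<in> maximal_below \<G> X" "m\<^sub>1 \<noteq> m\<^sub>2"
    and "G \<le> m\<^sub>1" and "J \<le> m\<^sub>2"
  shows "inf G J = bot"
proof -
  obtain \<phi> where bij: "bij_betw \<phi> (building_product \<G> X) {bot..X}"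
    and ord: "\<And>f g. f \<in> building_product \<G> X \<Longrightarrow> g \<in> building_product \<G> X \<Longrightarrow>
      (\<forall>G\<in>maximal_below \<G> X. f G \<le> g G) \<longleftrightarrow> \<phi> f \<le> \<phi> g"
    and unit: "\<And>G. G \<in> maximal_below \<G> X \<Longrightarrow> \<phi> (\<lambda>H. if H = G then G else bot) = G"
    and "\<phi> (\<lambda>_. bot) = bot"
    using building_setD_iso[OF bs \<open>X \<noteq> bot\<close>] by blast
  define u :: "'a \<Rightarrow> 'a \<Rightarrow> 'a" where "u m = (\<lambda>H. if H = m then m else bot)" for m
  have u: "u m \<in> building_product \<G> X" if "m \<in> maximal_below \<G> X" for m
    using that by (auto simp: u_def building_product_def)
  have below_X: "m\<^sub>1 \<le> X" using m(1) by (simp add: maximal_below_def)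
  have "inf G J \<in> {bot..X}"
    using \<open>G \<le> m\<^sub>1\<close> below_X by (simp add: le_infI1)
  then obtain k where k: "k \<in> building_product \<G> X" "\<phi> k = inf G J"
    using bij unfolding bij_betw_def by (metis imageE)
  have "\<phi> (u m\<^sub>1) = m\<^sub>1" "\<phi> (u m\<^sub>2) = m\<^sub>2"
    using unit m(1,2) by (simp_all add: u_def)
  then have "\<phi> k \<le> \<phi> (u m\<^sub>1)" "\<phi> k \<le> \<phi> (u m\<^sub>2)"
    using k(2) \<open>G \<le> m\<^sub>1\<close> \<open>J \<le> m\<^sub>2\<close> by (simp_all add: le_infI1 le_infI2)
  then have le1: "\<forall>H\<in>maximal_below \<G> X. k H \<le> u m\<^sub>1 H"
    and le2: "\<forall>H\<in>maximal_below \<G> X. k H \<le> u m\<^sub>2 H"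
    using ord[OF k(1) u[OF m(1)]] ord[OF k(1) u[OF m(2)]] by blast+
  have "k H = bot" for H
  proof (cases "H \<in> maximal_below \<G> X")
    case True
    then have "k H \<le> (if H = m\<^sub>1 then u m\<^sub>2 H else u m\<^sub>1 H)"
      using le1 le2 by (cases "H = m\<^sub>1") simp_all
    then show ?thesis using m(3) by (simp add: u_def bot_unique split: if_splits)
  next
    case False
    then show ?thesis using k(1) by (simp add: building_product_def)
  qed
  then have "k = (\<lambda>_. bot)" by blast
  then show ?thesis using k(2) \<open>\<phi> (\<lambda>_. bot) = bot\<close> by simp
qed

lemma building_set_sup_mem:
  fixes \<G> :: "'a::{finite,complete_lattice} set"
  assumes bs: "building_set \<G>" and "G \<in> \<G>" "J \<in> \<G>" and "inf G J \<noteq> bot"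
  shows "sup G J \<in> \<G>"
proof -
  have "sup G J \<noteq> bot" using \<open>inf G J \<noteq> bot\<close> by (metis inf_bot_left sup_eq_bot_iff)
  obtain m\<^sub>1 m\<^sub>2 where m: "m\<^sub>1 \<in> maximal_below \<G> (sup G J)" "G \<le> m\<^sub>1"
    "m\<^sub>2 \<in> maximal_below \<G> (sup G J)" "J \<le> m\<^sub>2"
    using ex_maximal_below[of G \<G> "sup G J"] ex_maximal_below[of J \<G> "sup G J"] assms(2,3) by auto
  then have "m\<^sub>1 = m\<^sub>2"
    using building_set_inf_eq_bot[OF bs \<open>sup G J \<noteq> bot\<close>] \<open>inf G J \<noteq> bot\<close> by blast
  then have "sup G J = m\<^sub>1"
    using m by (auto simp: maximal_below_def intro: order_antisym)
  then show ?thesis using m(1) by (simp add: maximal_below_def)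
qed

section \<open>Stellar subdivision on label sets\<close>

text \<open>A cone \<open>V(C)\<close> with linearly independent generators contains \<open>V(\<lfloor>G\<rfloor>)\<close> as a face
  iff \<open>\<lfloor>G\<rfloor> \<subseteq> C\<close>, and its faces are the \<open>V(\<rho>)\<close> for \<open>\<rho> \<subseteq> C\<close>. So stellar subdivision can be
  carried out on the label sets \<open>C\<close>; \<open>star_boundary_labels\<close> labels the faces \<open>\<rho>\<close> that
  are coned off to the new ray \<open>v\<^sub>G\<close>.\<close>

definition star_boundary_labels :: "'a::complete_lattice set set \<Rightarrow> 'a \<Rightarrow> 'a set set" where
  "star_boundary_labels F G = {\<rho>. \<exists>C\<in>F. atoms_below G \<subseteq> C \<and> \<rho> \<subseteq> C \<and> \<not> atoms_below G \<subseteq> \<rho>}"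

definition stellar_labels :: "'a::complete_lattice set set \<Rightarrow> 'a \<Rightarrow> 'a set set" where
  "stellar_labels F G = {C \<in> F. \<not> atoms_below G \<subseteq> C}
     \<union> insert G ` star_boundary_labels F G \<union> star_boundary_labels F G"

definition simplicial_labels :: "'a::{finite,complete_lattice} set \<Rightarrow> 'a set set \<Rightarrow> bool" where
  "simplicial_labels \<G> F \<longleftrightarrow> (\<forall>C\<in>F. C \<subseteq> \<G> \<and> independent (vvec ` C))"

lemma simplicial_labelsD_Vcone:
  fixes C :: "'a::{finite,complete_lattice} set"
  assumes at: "atomic_lattice TYPE('a)" and "bot \<notin> \<G>"
    and "simplicial_labels \<G> F" and "C \<in> F"
  shows "faces (Vcone C) = Vcone ` Pow C"
    and "Vcone (atoms_below G) face_of Vcone C \<longleftrightarrow> atoms_below G \<subseteq> C"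
    and "D \<subseteq> C \<Longrightarrow> Vcone (atoms_below G) \<subseteq> Vcone D \<longleftrightarrow> atoms_below G \<subseteq> D"
proof -
  have "bot \<notin> C" and ind: "independent (vvec ` C)"
    using assms(2-4) by (auto simp: simplicial_labels_def)
  then show "faces (Vcone C) = Vcone ` Pow C"
    and "Vcone (atoms_below G) face_of Vcone C \<longleftrightarrow> atoms_below G \<subseteq> C"
    by (simp_all add: faces_Vcone Vcone_atoms_below_face_of_iff[OF at])
  show "D \<subseteq> C \<Longrightarrow> Vcone (atoms_below G) \<subseteq> Vcone D \<longleftrightarrow> atoms_below G \<subseteq> D"
    using Vcone_atoms_below_subset_iff[OF at] \<open>bot \<notin> C\<close> by blast
qed

lemma star_boundary_Vcone_image:
  fixes h :: "(real, 'a::{finite,complete_lattice}) vec set \<Rightarrow> 'b"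
  assumes at: "atomic_lattice TYPE('a)" and "bot \<notin> \<G>"
    and labels: "simplicial_labels \<G> F"
  shows "{h \<rho> | \<sigma> \<rho>. \<sigma> \<in> Vcone ` F \<and> Vcone (atoms_below G) face_of \<sigma>
      \<and> \<rho> \<in> faces \<sigma> \<and> \<not> Vcone (atoms_below G) \<subseteq> \<rho>}
    = (\<lambda>D. h (Vcone D)) ` star_boundary_labels F G"
proof (intro equalityI subsetI)
  note Vcone_facts = simplicial_labelsD_Vcone[OF at \<open>bot \<notin> \<G>\<close> labels]
  fix x assume "x \<in> {h \<rho> | \<sigma> \<rho>. \<sigma> \<in> Vcone ` F \<and> Vcone (atoms_below G) face_of \<sigma>
      \<and> \<rho> \<in> faces \<sigma> \<and> \<not> Vcone (atoms_below G) \<subseteq> \<rho>}"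
  then obtain C \<rho> where C: "C \<in> F" "Vcone (atoms_below G) face_of Vcone C" "\<rho> \<in> faces (Vcone C)"
    "\<not> Vcone (atoms_below G) \<subseteq> \<rho>" "x = h \<rho>"
    by blast
  then obtain D where D: "D \<subseteq> C" "\<rho> = Vcone D" using Vcone_facts(1) by blast
  have "atoms_below G \<subseteq> C" using Vcone_facts(2) C(1,2) by blast
  moreover have "\<not> atoms_below G \<subseteq> D" using Vcone_facts(3)[OF C(1) D(1)] C(4) D(2) by simp
  ultimately have "D \<in> star_boundary_labels F G"
    using C(1) D(1) unfolding star_boundary_labels_def by blast
  then show "x \<in> (\<lambda>D. h (Vcone D)) ` star_boundary_labels F G"
    using C(5) D(2) by blast
next
  note Vcone_facts = simplicial_labelsD_Vcone[OF at \<open>bot \<notin> \<G>\<close> labels]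
  fix x assume "x \<in> (\<lambda>D. h (Vcone D)) ` star_boundary_labels F G"
  then obtain C D where C: "C \<in> F" "atoms_below G \<subseteq> C" "D \<subseteq> C" "\<not> atoms_below G \<subseteq> D"
    and "x = h (Vcone D)"
    unfolding star_boundary_labels_def by blast
  moreover have "Vcone (atoms_below G) face_of Vcone C" using Vcone_facts(2) C(1,2) by blast
  moreover have "Vcone D \<in> faces (Vcone C)" using Vcone_facts(1) C(1,3) by blast
  moreover have "\<not> Vcone (atoms_below G) \<subseteq> Vcone D" using Vcone_facts(3)[OF C(1,3)] C(4) by simp
  ultimately show "x \<in> {h \<rho> | \<sigma> \<rho>. \<sigma> \<in> Vcone ` F \<and> Vcone (atoms_below G) face_of \<sigma>
      \<and> \<rho> \<in> faces \<sigma> \<and> \<not> Vcone (atoms_below G) \<subseteq> \<rho>}"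
    by blast
qed

lemma stellar_Vcone_image:
  assumes "atomic_lattice TYPE('a::{finite,complete_lattice})"
    and "bot \<notin> \<G>" and "simplicial_labels \<G> F"
  shows "stellar (Vcone ` F) (Vcone (atoms_below G)) (vvec G) = Vcone ` stellar_labels F (G::'a)"
proof -
  have "{\<sigma> \<in> Vcone ` F. \<not> Vcone (atoms_below G) face_of \<sigma>} = Vcone ` {C \<in> F. \<not> atoms_below G \<subseteq> C}"
    using simplicial_labelsD_Vcone(2)[OF assms] by auto
  then show ?thesis
    unfolding stellar_def stellar_labels_def image_Un image_image
      star_boundary_Vcone_image[OF assms, of "\<lambda>\<rho>. add_ray \<rho> (vvec G)", unfolded add_ray_Vcone]
      star_boundary_Vcone_image[OF assms, of "\<lambda>\<rho>. \<rho>"]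
    by simp
qed

lemma independent_insert_sum:
  fixes W :: "'v::real_vector set"
  assumes ind: "independent W" and "finite A" "A \<subseteq> W" "\<rho> \<subseteq> W" "\<not> A \<subseteq> \<rho>"
  shows "independent (insert (\<Sum>A) \<rho>)"
proof (rule independent_insertI)
  obtain a where a: "a \<in> A" "a \<notin> \<rho>" using \<open>\<not> A \<subseteq> \<rho>\<close> by blast
  show "\<Sum>A \<notin> span \<rho>"
  proof
    assume "\<Sum>A \<in> span \<rho>"
    then have "\<Sum>A \<in> span (W - {a})"
      using \<open>\<rho> \<subseteq> W\<close> a(2) span_mono[of \<rho> "W - {a}"] by blast
    moreover have "\<Sum>(A - {a}) \<in> span (W - {a})"
      using \<open>A \<subseteq> W\<close> by (intro span_sum) (auto intro: span_base)
    ultimately have "\<Sum>A - \<Sum>(A - {a}) \<in> span (W - {a})" by (rule span_diff)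
    moreover have "\<Sum>A - \<Sum>(A - {a}) = a"
      using sum.remove[OF \<open>finite A\<close> a(1), of "\<lambda>x. x"] by simp
    ultimately show False
      using ind a(1) \<open>A \<subseteq> W\<close> unfolding dependent_def by auto
  qed
  show "independent \<rho>" using ind \<open>\<rho> \<subseteq> W\<close> by (rule independent_mono)
qed

lemma simplicial_labels_stellar_labels:
  assumes at: "atomic_lattice TYPE('a::{finite,complete_lattice})"
    and "G \<in> \<G>" and labels: "simplicial_labels \<G> F"
  shows "simplicial_labels \<G> (stellar_labels F (G::'a))"
proof -
  have inj: "inj (vvec :: 'a \<Rightarrow> _)" by (rule inj_vvec[OF at])
  have "independent (vvec ` insert G \<rho>)"
    if "C \<in> F" "atoms_below G \<subseteq> C" "\<rho> \<subseteq> C" "\<not> atoms_below G \<subseteq> \<rho>" for C \<rho>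
  proof -
    have "vvec G = \<Sum>(vvec ` atoms_below G)"
      using vvec_eq_sum_atoms[of G] inj by (simp add: sum.reindex inj_on_subset[OF inj])
    moreover have "\<not> vvec ` atoms_below G \<subseteq> vvec ` \<rho>"
      using that(4) inj by (simp add: inj_image_subset_iff)
    ultimately show ?thesis
      using independent_insert_sum[of "vvec ` C" "vvec ` atoms_below G" "vvec ` \<rho>"] that labels
      by (auto simp: simplicial_labels_def image_mono)
  qed
  moreover have "independent (vvec ` \<rho>)" if "C \<in> F" "\<rho> \<subseteq> C" for C \<rho>
    using labels that independent_mono[of "vvec ` C" "vvec ` \<rho>"]
    by (auto simp: simplicial_labels_def image_mono)
  ultimately show ?thesis
    using labels \<open>G \<in> \<G>\<close> unfolding simplicial_labels_def stellar_labels_def star_boundary_labels_def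
    by blast
qed

definition Theta_labels :: "'a::{finite,complete_lattice} list \<Rightarrow> 'a set set" where
  "Theta_labels gs = fold (\<lambda>G F. stellar_labels F G) gs (Pow {a. is_atom a})"

lemma Theta0_eq_Vcone_image: "Theta0 TYPE('a) = Vcone ` Pow {a::'a::{finite,complete_lattice}. is_atom a}"
proof -
  have axes: "{axis a 1 | a::'a. is_atom a} = vvec ` {a. is_atom a}"
    using vvec_atom by force
  show ?thesis
    unfolding Theta0_def axes Vcone_def[symmetric] by (simp add: faces_Vcone independent_vvec_atoms)
qed

lemma simplicial_labels_atoms:
  "building_set \<G> \<Longrightarrow> simplicial_labels \<G> (Pow {a::'a::{finite,complete_lattice}. is_atom a})"
  using atom_mem_building_set independent_vvec_atoms unfolding simplicial_labels_def by blast

lemma simplicial_labels_fold_stellar_labels: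
  assumes "atomic_lattice TYPE('a::{finite,complete_lattice})"
    and "simplicial_labels \<G> F" and "set ps \<subseteq> (\<G>::'a set)"
  shows "simplicial_labels \<G> (fold (\<lambda>G F. stellar_labels F G) ps F)"
  using assms(2,3)
  by (induction ps arbitrary: F) (auto intro: simplicial_labels_stellar_labels[OF assms(1)])

lemma fold_stellar_Vcone_image:
  assumes at: "atomic_lattice TYPE('a::{finite,complete_lattice})" and "bot \<notin> \<G>"
    and "simplicial_labels \<G> F" and "set ps \<subseteq> (\<G>::'a set)"
  shows "fold (\<lambda>G \<Theta>. stellar \<Theta> (Vcone (atoms_below G)) (vvec G)) ps (Vcone ` F)
    = Vcone ` fold (\<lambda>G F. stellar_labels F G) ps F"
  using assms(3,4)
proof (induction ps arbitrary: F)
  case (Cons G ps)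
  then show ?case
    using stellar_Vcone_image[OF at \<open>bot \<notin> \<G>\<close>] simplicial_labels_stellar_labels[OF at] by simp
qed simp

lemma Theta_tilde_eq_Vcone_image:
  assumes at: "atomic_lattice TYPE('a::{finite,complete_lattice})"
    and bs: "building_set \<G>" and "set gs \<subseteq> (\<G>::'a set)"
  shows "Theta_tilde gs = Vcone ` Theta_labels gs"
  unfolding Theta_tilde_def Theta_labels_def Theta0_eq_Vcone_image
  using fold_stellar_Vcone_image[OF at building_setD_bot[OF bs] simplicial_labels_atoms[OF bs]] assms(3) .

lemma simplicial_labels_Theta_labels:
  assumes "atomic_lattice TYPE('a::{finite,complete_lattice})"
    and "building_set \<G>" and "set gs \<subseteq> (\<G>::'a set)"
  shows "simplicial_labels \<G> (Theta_labels gs)"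
  unfolding Theta_labels_def
  by (rule simplicial_labels_fold_stellar_labels[OF assms(1) simplicial_labels_atoms[OF assms(2)] assms(3)])

section \<open>Nested sets survive the subdivisions\<close>

lemma Sup_not_atom_if_two_nonbot:
  fixes T :: "'a::complete_lattice set"
  assumes "bot \<notin> T" and "x \<in> T" "y \<in> T" "x \<noteq> y"
  shows "\<not> is_atom (Sup T)"
proof
  assume "is_atom (Sup T)"
  then have "x = Sup T" "y = Sup T"
    using assms Sup_upper[of _ T] unfolding is_atom_def by metis+
  then show False using \<open>x \<noteq> y\<close> by simp
qed

lemma Sup_insert_not_below:
  fixes G :: "'a::complete_lattice"
  shows "Sup (insert G {H \<in> T. \<not> H \<le> G}) = sup G (Sup T)"
proof (rule order_antisym)
  show "Sup (insert G {H \<in> T. \<not> H \<le> G}) \<le> sup G (Sup T)"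
    by (auto intro: Sup_least le_supI2 Sup_upper)
  have "H \<le> Sup (insert G {H \<in> T. \<not> H \<le> G})" if "H \<in> T" for H
    using that by (cases "H \<le> G") (auto intro: le_supI1 le_supI2 Sup_upper)
  then show "sup G (Sup T) \<le> Sup (insert G {H \<in> T. \<not> H \<le> G})"
    by (auto intro: Sup_upper Sup_least)
qed

lemma nested_atoms_below_subset_imp_atom:
  assumes at: "atomic_lattice TYPE('a::{finite,complete_lattice})"
    and "nested \<G> C" and "G \<in> \<G>" and "bot \<notin> \<G>" and "atoms_below (G::'a) \<subseteq> C"
  shows "is_atom G"
proof (rule ccontr)
  assume "\<not> is_atom G"
  moreover have "G \<noteq> bot" using assms(3,4) by blast
  ultimately have "2 \<le> card (atoms_below G)" using card_atoms_below_ge_2[OF at] by blast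
  moreover have "\<forall>x\<in>atoms_below G. \<forall>y\<in>atoms_below G. x \<noteq> y \<longrightarrow> \<not> x \<le> y"
    unfolding atoms_below_def using is_atom_le_eq by blast
  ultimately have "Sup (atoms_below G) \<notin> \<G>" using nestedD[OF assms(2,5)] by blast
  then show False using atomic_Sup_atoms_below[OF at] assms(3) by simp
qed

lemma building_set_sup_mem_above:
  fixes G :: "'a::{finite,complete_lattice}"
  assumes "building_set \<G>" and "G \<in> \<G>" "J \<in> \<G>" and "inf G J \<noteq> bot"
    and "\<forall>H\<in>\<G>. G < H \<longrightarrow> H \<in> P"
  shows "sup G J \<in> insert G P"
  using building_set_sup_mem[OF assms(1-4)] assms(5) by (auto simp: less_le)

text \<open>Otherwise \<open>G\<close> together with the members of \<open>T\<close> not below \<open>G\<close> would be an antichain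
  in \<open>C\<close> whose join \<open>sup G (Sup T)\<close> lies in \<open>\<G>\<close>, because \<open>G\<close> and \<open>Sup T\<close> share the atom \<open>a\<close>.\<close>
lemma nested_crossing_Sup_notin:
  fixes G :: "'a::{finite,complete_lattice}"
  assumes bs: "building_set \<G>" and G: "G \<in> \<G>" and above: "\<forall>H\<in>\<G>. G < H \<longrightarrow> H \<in> P"
    and N: "nested ({a. is_atom a} \<union> insert G P) C" and "G \<in> C"
    and T: "T \<subseteq> (C - {G}) \<union> atoms_below G" and anti: "\<forall>x\<in>T. \<forall>y\<in>T. x \<noteq> y \<longrightarrow> \<not> x \<le> y"
    and a: "a \<in> T" "a \<in> atoms_below G" and H\<^sub>0: "H\<^sub>0 \<in> T" "\<not> H\<^sub>0 \<le> G"
  shows "Sup T \<notin> \<G>"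
proof
  assume "Sup T \<in> \<G>"
  have "a \<le> G" using a(2) by (simp add: atoms_below_def)
  define T' where "T' = insert G {H \<in> T. \<not> H \<le> G}"
  have "{H \<in> T. \<not> H \<le> G} \<subseteq> C - {G}"
    using T by (auto simp: atoms_below_def)
  then have "T' \<subseteq> C"
    using \<open>G \<in> C\<close> unfolding T'_def by blast
  moreover have "2 \<le> card T'"
  proof -
    have "{G, H\<^sub>0} \<subseteq> T'" "G \<noteq> H\<^sub>0" using H\<^sub>0 unfolding T'_def by auto
    then show ?thesis using card_mono[of T' "{G, H\<^sub>0}"] by simp
  qed
  moreover have "\<forall>x\<in>T'. \<forall>y\<in>T'. x \<noteq> y \<longrightarrow> \<not> x \<le> y"
  proof -
    have "\<not> G \<le> H" if H: "H \<in> T" "\<not> H \<le> G" for H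
    proof
      assume "G \<le> H"
      with \<open>a \<le> G\<close> have "a \<le> H" by (rule order_trans)
      moreover have "a \<noteq> H" using \<open>a \<le> G\<close> H(2) by blast
      ultimately show False using anti a(1) H(1) by blast
    qed
    then show ?thesis using anti unfolding T'_def by blast
  qed
  ultimately have "Sup T' \<notin> {a. is_atom a} \<union> insert G P"
    by (rule nestedD[OF N])
  moreover have "inf G (Sup T) \<noteq> bot"
  proof
    assume "inf G (Sup T) = bot"
    moreover have "a \<le> inf G (Sup T)"
      using \<open>a \<le> G\<close> Sup_upper[OF a(1)] by simp
    ultimately show False using a(2) by (simp add: atoms_below_def is_atom_def bot_unique)
  qed
  then have "Sup T' \<in> insert G P"
    unfolding T'_def Sup_insert_not_below
    by (rule building_set_sup_mem_above[OF bs G \<open>Sup T \<in> \<G>\<close> _ above])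
  ultimately show False by blast
qed

text \<open>The cone of \<open>C\<close> arises by subdividing at \<open>G\<close> the cone spanned by \<open>C - {G}\<close>
  and the atoms of \<open>G\<close>; this is the combinatorial heart of the theorem.\<close>
lemma nested_remove_insert_atoms_below:
  fixes G :: "'a::{finite,complete_lattice}"
  assumes bs: "building_set \<G>" and G: "G \<in> \<G>" and P: "P \<subseteq> \<G>"
    and above: "\<forall>H\<in>\<G>. G < H \<longrightarrow> H \<in> P" and not_below: "\<forall>J\<in>P. \<not> J \<le> G"
    and N: "nested ({a. is_atom a} \<union> insert G P) C" and "G \<in> C"
  shows "nested ({a. is_atom a} \<union> P) ((C - {G}) \<union> atoms_below G)"
proof (rule nestedI)
  have "C \<subseteq> {a. is_atom a} \<union> insert G P" using nestedD_subset[OF N] .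
  then show sub: "(C - {G}) \<union> atoms_below G \<subseteq> {a. is_atom a} \<union> P"
    by (auto simp: atoms_below_def)
  have AP: "{a. is_atom a} \<union> P \<subseteq> \<G>" using atom_mem_building_set[OF bs] P by blast
  fix T assume T: "T \<subseteq> (C - {G}) \<union> atoms_below G" and "2 \<le> card T"
    and anti: "\<forall>x\<in>T. \<forall>y\<in>T. x \<noteq> y \<longrightarrow> \<not> x \<le> y"
  show "Sup T \<notin> {a. is_atom a} \<union> P"
  proof
    assume J: "Sup T \<in> {a. is_atom a} \<union> P"
    consider "T \<subseteq> C - {G}"
      | "\<forall>H\<in>T. H \<le> G"
      | a H\<^sub>0 where "a \<in> T" "a \<in> atoms_below G" "H\<^sub>0 \<in> T" "\<not> H\<^sub>0 \<le> G"
      using T by blast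
    then show False
    proof cases
      case 1
      then show False using nestedD[OF N _ \<open>2 \<le> card T\<close> anti] J by blast
    next
      case 2
      obtain x y where "x \<in> T" "y \<in> T" "x \<noteq> y"
        using \<open>2 \<le> card T\<close> card_le_Suc0_iff_eq[of T] by auto
      moreover have "bot \<notin> T" using T sub AP building_setD_bot[OF bs] by blast
      moreover have "Sup T \<notin> P" using 2 not_below by (meson Sup_least)
      ultimately show False using J Sup_not_atom_if_two_nonbot by blast
    next
      case 3
      then show False
        using nested_crossing_Sup_notin[OF bs G above N \<open>G \<in> C\<close> T anti] J AP by blast
    qed
  qed
qed

lemma nested_mem_stellar_labels:
  fixes G :: "'a::{finite,complete_lattice}"
  assumes at: "atomic_lattice TYPE('a)" and bs: "building_set \<G>"
    and G: "G \<in> \<G>" and P: "P \<subseteq> \<G>"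
    and above: "\<forall>H\<in>\<G>. G < H \<longrightarrow> H \<in> P" and not_below: "\<forall>J\<in>P. \<not> J \<le> G"
    and F: "\<And>S. nested ({a. is_atom a} \<union> P) S \<Longrightarrow> S \<in> F"
    and N: "nested ({a. is_atom a} \<union> insert G P) C"
  shows "C \<in> stellar_labels F G"
proof -
  have bot: "bot \<notin> {a. is_atom a} \<union> insert G P"
    using building_setD_bot[OF bs] G P by (auto simp: is_atom_def)
  have atom_if_subset: "is_atom G" if "atoms_below G \<subseteq> D" "D \<subseteq> C" for D
    using nested_atoms_below_subset_imp_atom[OF at nested_subset[OF N that(2)] _ bot that(1)] by simp
  show ?thesis
  proof (cases "G \<in> C")
    case False
    then have "\<not> atoms_below G \<subseteq> C"
      using atom_if_subset[of C] atoms_below_atom[of G] by auto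
    moreover have "C \<in> F"
      using False nestedD_subset[OF N] by (intro F nested_building_subset[OF N]) auto
    ultimately show ?thesis unfolding stellar_labels_def by blast
  next
    case True
    have "\<not> atoms_below G \<subseteq> C - {G}"
      using atom_if_subset[of "C - {G}"] atoms_below_atom[of G] by auto
    moreover have "(C - {G}) \<union> atoms_below G \<in> F"
      by (rule F[OF nested_remove_insert_atoms_below[OF bs G P above not_below N True]])
    ultimately have "C - {G} \<in> star_boundary_labels F G"
      unfolding star_boundary_labels_def by blast
    moreover have "C = insert G (C - {G})" using True by blast
    ultimately show ?thesis unfolding stellar_labels_def by blast
  qed
qed

lemma mem_take_if_greater_nth:
  fixes gs :: "'a::order list"
  assumes ord: "\<forall>i<length gs. \<forall>j<length gs. gs ! i \<le> gs ! j \<longrightarrow> j \<le> i"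
    and "k < length gs" and "H \<in> set gs" and "gs ! k < H"
  shows "H \<in> set (take k gs)"
proof -
  obtain j where j: "j < length gs" "gs ! j = H" using \<open>H \<in> set gs\<close> by (metis in_set_conv_nth)
  have "j \<le> k"
    using ord[rule_format, of k j] j \<open>k < length gs\<close> \<open>gs ! k < H\<close> by simp
  moreover have "j \<noteq> k" using j(2) \<open>gs ! k < H\<close> by auto
  ultimately have "j < k" by simp
  then show ?thesis using j by (auto simp: in_set_conv_nth)
qed

lemma not_le_nth_if_mem_take:
  assumes ord: "\<forall>i<length gs. \<forall>j<length gs. gs ! i \<le> gs ! j \<longrightarrow> j \<le> i"
    and "k < length gs" and "J \<in> set (take k gs)"
  shows "\<not> J \<le> gs ! k"
proof
  assume "J \<le> gs ! k"
  obtain j where "j < k" "gs ! j = J"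
    using \<open>J \<in> set (take k gs)\<close> by (auto simp: in_set_conv_nth)
  then show False
    using ord[rule_format, of j k] \<open>k < length gs\<close> \<open>J \<le> gs ! k\<close> by simp
qed

lemma nested_mem_Theta_labels_take:
  fixes gs :: "'a::{finite,complete_lattice} list"
  assumes at: "atomic_lattice TYPE('a)" and bs: "building_set \<G>" and "set gs = \<G>"
    and ord: "\<forall>i<length gs. \<forall>j<length gs. gs ! i \<le> gs ! j \<longrightarrow> j \<le> i"
  shows "k \<le> length gs \<Longrightarrow> nested ({a. is_atom a} \<union> set (take k gs)) S
    \<Longrightarrow> S \<in> Theta_labels (take k gs)"
proof (induction k arbitrary: S)
  case 0
  then show ?case using nestedD_subset by (fastforce simp: Theta_labels_def)
next
  case (Suc k)
  then have k: "k < length gs" by simp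
  have take: "take (Suc k) gs = take k gs @ [gs ! k]" using k by (rule take_Suc_conv_app_nth)
  have "S \<in> stellar_labels (Theta_labels (take k gs)) (gs ! k)"
  proof (rule nested_mem_stellar_labels[OF at bs])
    show "gs ! k \<in> \<G>" "set (take k gs) \<subseteq> \<G>"
      using k \<open>set gs = \<G>\<close> by (auto dest: in_set_takeD)
    show "\<forall>H\<in>\<G>. gs ! k < H \<longrightarrow> H \<in> set (take k gs)"
      using mem_take_if_greater_nth[OF ord k] \<open>set gs = \<G>\<close> by blast
    show "\<forall>J\<in>set (take k gs). \<not> J \<le> gs ! k"
      using not_le_nth_if_mem_take[OF ord k] by blast
    show "nested ({a. is_atom a} \<union> insert (gs ! k) (set (take k gs))) S"
      using Suc.prems(2) unfolding take by simp
  qed (use Suc.IH k in simp)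
  then show ?case unfolding take by (simp add: Theta_labels_def)
qed

lemma nested_mem_Theta_labels:
  fixes gs :: "'a::{finite,complete_lattice} list"
  assumes "atomic_lattice TYPE('a)" and bs: "building_set \<G>" and "set gs = \<G>"
    and "\<forall>i<length gs. \<forall>j<length gs. gs ! i \<le> gs ! j \<longrightarrow> j \<le> i"
    and "nested \<G> S"
  shows "S \<in> Theta_labels gs"
proof -
  have "{a. is_atom a} \<union> set gs = \<G>"
    using atom_mem_building_set[OF bs] \<open>set gs = \<G>\<close> by blast
  then show ?thesis
    using nested_mem_Theta_labels_take[OF assms(1-4), of "length gs" S] assms(5) by simp
qed

lemma nested_if_Vcone_eq_nested:
  assumes "atomic_lattice TYPE('a::{finite,complete_lattice})" and "bot \<notin> \<G>"
    and "nested \<G> S" and "T \<subseteq> (\<G>::'a set)" and "Vcone T = Vcone S"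
  shows "nested \<G> T"
proof -
  have "T \<subseteq> S"
    using mem_nested_if_vvec_in_Vcone[OF assms(1-3)] vvec_in_Vcone assms(4,5) by blast
  then show ?thesis by (rule nested_subset[OF assms(3)])
qed

theorem theorem6p1:
  fixes \<G> :: "'a::{finite,complete_lattice} set" and gs :: "'a list"
  assumes "atomic_lattice TYPE('a)"
    and "building_set \<G>"
    and "distinct gs" and "set gs = \<G>"
    and "\<forall>i<length gs. \<forall>j<length gs. gs ! i \<le> gs ! j \<longrightarrow> j \<le> i"
  shows "Theta \<G> gs = Sigma_fan \<G>"
proof -
  note at = assms(1) and bs = assms(2)
  have tilde: "Theta_tilde gs = Vcone ` Theta_labels gs"
    using Theta_tilde_eq_Vcone_image[OF at bs] assms(4) by simp
  have labels_sub: "C \<subseteq> \<G>" if "C \<in> Theta_labels gs" for C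
    using simplicial_labels_Theta_labels[OF at bs] assms(4) that by (auto simp: simplicial_labels_def)
  have nested_labels: "S \<in> Theta_labels gs" if "nested \<G> S" for S
    using nested_mem_Theta_labels[OF at bs assms(4,5) that] .
  have not_removed: "Vcone S \<notin> {Vcone T | T. T \<subseteq> \<G> \<and> \<not> nested \<G> T}" if "nested \<G> S" for S
    using nested_if_Vcone_eq_nested[OF at building_setD_bot[OF bs] that] by blast
  show ?thesis
    unfolding Theta_def Sigma_fan_def tilde
    using labels_sub nested_labels not_removed by blast
qed

end
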